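(* Let $H$ be a core digraph with tree duality. The following are equivalent: (1) $H$ has bounded-height tree duality; (2) for some $n\ge 1$ there is a homomorphism $H_n^*\to H$; (3) in the exponential digraph $H^{H^2}$ there is a directed path from the first projection $\pi_1$ to the second projection $\pi_2$.
   Context: Digraphs are finite; loops allowed; homomorphisms are arc-preserving vertex maps. A core is a digraph every endomorphism of which is an automorphism. A set $\mathcal F$ is a complete set of obstructions for $H$ if for all $G$: $G\to H$ iff no $F\in\mathcal F$ has $F\to G$. $H$ has tree duality if it has a complete set of obstructions consisting of oriented trees (digraphs whose underlying undirected graph is a tree). The algebraic height of an oriented tree is the minimum number of arcs of a directed path to which it maps homomorphically; $H$ has bounded-height tree duality if for some constant $m$ it has a complete set of obstructions consisting of oriented trees of algebraic height at most $m$. Products are categorical: $V(G\times H)=V(G)\times V(H)$, $((g,h),(g',h'))$ an arc iff $(g,g')\in A(G)$ and $(h,h')\in A(H)$. For an equivalence $\simeq$ on $V(G)$, the quotient $G/{\simeq}$ has the classes as vertices, $(X,Y)$ an arc iff some $x\in X,y\in Y$ have $(x,y)\in A(G)$. $P_n$ is the digraph with vertices $0,\dots,n$ and arcs $(0,0),(0,1),(1,2),\dots,(n-1,n),(n,n)$. The $n$-th crushed cylinder is $H_n^*=(H^2\times P_n)/{\simeq_n}$, where $(u,v,i)\simeq_n(u',v',j)$ iff either $i=j=0$ and $u=u'$, or $i=j=n$ and $v=v'$, or $(u,v,i)=(u',v',j)$. The exponential digraph $H^{K}$ has as vertices all maps $V(K)\to V(H)$, and $(f,g)$ is an arc iff $(f(x),g(y))\in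 A(H)$ for every arc $(x,y)$ of $K$; $\pi_1,\pi_2:V(H^2)\to V(H)$ are the coordinate projections. *)

theory Defs
  imports "HOL-Library.FuncSet"
begin

text \<open>A digraph is a pair (vertex set, arc relation); loops allowed.\<close>
type_synonym 'a digraph = "'a set \<times> ('a \<times> 'a) set"

definition verts :: "'a digraph \<Rightarrow> 'a set" where "verts G = fst G"
definition arcs :: "'a digraph \<Rightarrow> ('a \<times> 'a) set" where "arcs G = snd G"

definition wf_digraph :: "'a digraph \<Rightarrow> bool" where
  "wf_digraph G \<longleftrightarrow> finite (verts G) \<and> arcs G \<subseteq> verts G \<times> verts G"

definition is_hom :: "'a digraph \<Rightarrow> 'b digraph \<Rightarrow> ('a \<Rightarrow> 'b) \<Rightarrow> bool" where
  "is_hom G H f \<longleftrightarrow> (\<forall>x\<in>verts G. f x \<in> verts H) \<and>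
     (\<forall>x y. (x, y) \<in> arcs G \<longrightarrow> (f x, f y) \<in> arcs H)"

definition hom_exists :: "'a digraph \<Rightarrow> 'b digraph \<Rightarrow> bool" (infix "\<rightarrow>\<^sub>h" 50) where
  "G \<rightarrow>\<^sub>h H \<longleftrightarrow> (\<exists>f. is_hom G H f)"

definition is_automorphism :: "'a digraph \<Rightarrow> ('a \<Rightarrow> 'a) \<Rightarrow> bool" where
  "is_automorphism G f \<longleftrightarrow> bij_betw f (verts G) (verts G) \<and>
     (\<forall>x\<in>verts G. \<forall>y\<in>verts G. (x, y) \<in> arcs G \<longleftrightarrow> (f x, f y) \<in> arcs G)"

definition is_core :: "'a digraph \<Rightarrow> bool" where
  "is_core H \<longleftrightarrow> wf_digraph H \<and> (\<forall>f. is_hom H H f \<longrightarrow> is_automorphism H f)"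

text \<open>Oriented trees: the underlying undirected graph (no loops, no multiple edges)
  is a tree, i.e. nonempty, connected and without cycles.\<close>
definition und_adj :: "'a digraph \<Rightarrow> 'a \<Rightarrow> 'a \<Rightarrow> bool" where
  "und_adj G x y \<longleftrightarrow> (x, y) \<in> arcs G \<or> (y, x) \<in> arcs G"

definition oriented_tree :: "'a digraph \<Rightarrow> bool" where
  "oriented_tree T \<longleftrightarrow> wf_digraph T \<and> verts T \<noteq> {} \<and>
     (\<forall>x. (x, x) \<notin> arcs T) \<and>
     (\<forall>x y. (x, y) \<in> arcs T \<longrightarrow> (y, x) \<notin> arcs T) \<and>
     (\<forall>x\<in>verts T. \<forall>y\<in>verts T. (x, y) \<in> {(a, b). und_adj T a b}\<^sup>*) \<and>
     \<not> (\<exists>xs. length xs \<ge> 3 \<and> distinct xs \<and>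
          (\<forall>i<length xs. und_adj T (xs ! i) (xs ! ((i + 1) mod length xs))))"

definition dpath :: "nat \<Rightarrow> nat digraph" where
  "dpath k = ({0..k}, {(i, Suc i) | i. i < k})"

definition alg_height :: "'a digraph \<Rightarrow> nat" where
  "alg_height T = (LEAST k. T \<rightarrow>\<^sub>h dpath k)"

text \<open>Complete sets of obstructions; test digraphs G range over all finite digraphs,
  represented (up to isomorphism) with natural-number vertices.\<close>
definition complete_obstructions :: "'a digraph \<Rightarrow> nat digraph set \<Rightarrow> bool" where
  "complete_obstructions H \<F> \<longleftrightarrow> (\<forall>F\<in>\<F>. wf_digraph F) \<and>
     (\<forall>G :: nat digraph. wf_digraph G \<longrightarrow> (G \<rightarrow>\<^sub>h H \<longleftrightarrow> \<not> (\<exists>F\<in>\<F>. F \<rightarrow>\<^sub>h G)))"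

definition tree_duality :: "'a digraph \<Rightarrow> bool" where
  "tree_duality H \<longleftrightarrow> (\<exists>\<F>. complete_obstructions H \<F> \<and> (\<forall>F\<in>\<F>. oriented_tree F))"

definition bounded_height_tree_duality :: "'a digraph \<Rightarrow> bool" where
  "bounded_height_tree_duality H \<longleftrightarrow> (\<exists>m \<F>. complete_obstructions H \<F> \<and>
     (\<forall>F\<in>\<F>. oriented_tree F \<and> alg_height F \<le> m))"

definition dprod :: "'a digraph \<Rightarrow> 'b digraph \<Rightarrow> ('a \<times> 'b) digraph" where
  "dprod G H = (verts G \<times> verts H,
     {((g, h), (g', h')). (g, g') \<in> arcs G \<and> (h, h') \<in> arcs H})"

definition quotient_digraph :: "'a digraph \<Rightarrow> ('a \<times> 'a) set \<Rightarrow> 'a set digraph" where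
  "quotient_digraph G r = (verts G // r,
     {(X, Y). X \<in> verts G // r \<and> Y \<in> verts G // r \<and> (\<exists>x\<in>X. \<exists>y\<in>Y. (x, y) \<in> arcs G)})"

definition Pn :: "nat \<Rightarrow> nat digraph" where
  "Pn n = ({0..n}, {(0, 0), (n, n)} \<union> {(i, Suc i) | i. i < n})"

definition crush_rel :: "'a digraph \<Rightarrow> nat \<Rightarrow> ((('a \<times> 'a) \<times> nat) \<times> (('a \<times> 'a) \<times> nat)) set" where
  "crush_rel H n = {(((u, v), i), ((u', v'), j)).
      ((u, v), i) \<in> verts (dprod (dprod H H) (Pn n)) \<and>
      ((u', v'), j) \<in> verts (dprod (dprod H H) (Pn n)) \<and>
      ((i = 0 \<and> j = 0 \<and> u = u') \<or> (i = n \<and> j = n \<and> v = v') \<or>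
       ((u, v), i) = ((u', v'), j))}"

definition crushed_cylinder :: "'a digraph \<Rightarrow> nat \<Rightarrow> (('a \<times> 'a) \<times> nat) set digraph" where
  "crushed_cylinder H n = quotient_digraph (dprod (dprod H H) (Pn n)) (crush_rel H n)"

definition dexp :: "'a digraph \<Rightarrow> 'k digraph \<Rightarrow> ('k \<Rightarrow> 'a) digraph" where
  "dexp H K = (verts K \<rightarrow>\<^sub>E verts H,
     {(f, g). f \<in> verts K \<rightarrow>\<^sub>E verts H \<and> g \<in> verts K \<rightarrow>\<^sub>E verts H \<and>
        (\<forall>x y. (x, y) \<in> arcs K \<longrightarrow> (f x, g y) \<in> arcs H)})"

definition proj1 :: "'a digraph \<Rightarrow> ('a \<times> 'a \<Rightarrow> 'a)" where
  "proj1 H = restrict fst (verts (dprod H H))"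

definition proj2 :: "'a digraph \<Rightarrow> ('a \<times> 'a \<Rightarrow> 'a)" where
  "proj2 H = restrict snd (verts (dprod H H))"

end

theory Submission
  imports Defs
begin

text \<open>
  The common tool is that oriented trees are balanced: every closed walk has net length
  zero, so a tree of algebraic height \<open>h\<close> maps to the directed path with \<open>h\<close> arcs.
  (1) \<open>\<Longrightarrow>\<close> (2): a tree of height below \<open>n\<close> mapping to \<open>H\<^sub>n\<^sup>*\<close> cannot meet both the bottom
  and the top level, so its bottom or top coordinate is a homomorphism to \<open>H\<close>; hence no
  obstruction maps to \<open>H\<^sub>m\<^sub>+\<^sub>1\<^sup>*\<close> when all have height at most \<open>m\<close>.
  (2) \<open>\<Longrightarrow>\<close> (3): the layers of \<open>H\<^sup>2 \<times> P\<^sub>n \<rightarrow> H\<^sub>n\<^sup>* \<rightarrow> H\<close> form a walk from \<open>g \<circ> \<pi>\<^sub>1\<close> to \<open>h \<circ> \<pi>\<^sub>2\<close> for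
  endomorphisms \<open>g, h\<close>; as \<open>H\<close> is a core these are automorphisms, and precomposition with
  their inverses yields a walk from \<open>\<pi>\<^sub>1\<close> to \<open>\<pi>\<^sub>2\<close>.
  (3) \<open>\<Longrightarrow>\<close> (1): a walk of length \<open>n\<close> glues homomorphisms of the overlapping bands of height
  \<open>2 n\<close> of a tree into a homomorphism of the whole tree, so every tree obstruction contains
  a subtree obstruction of height at most \<open>2 n\<close>.
\<close>

lemma verts_dprod [simp]: "verts (dprod G H) = verts G \<times> verts H"
  unfolding dprod_def verts_def by simp

lemma arcs_dprod [simp]:
  "((g, h), (g', h')) \<in> arcs (dprod G H) \<longleftrightarrow> (g, g') \<in> arcs G \<and> (h, h') \<in> arcs H"
  unfolding dprod_def arcs_def by simp

lemma verts_Pn [simp]: "verts (Pn n) = {0..n}"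
  unfolding Pn_def verts_def by simp

lemma arcs_Pn [simp]:
  "(i, j) \<in> arcs (Pn n) \<longleftrightarrow> (i = 0 \<and> j = 0) \<or> (i = n \<and> j = n) \<or> (j = Suc i \<and> i < n)"
  unfolding Pn_def arcs_def by auto

lemma verts_dpath [simp]: "verts (dpath k) = {0..k}"
  unfolding dpath_def verts_def by simp

lemma arcs_dpath [simp]: "(i, j) \<in> arcs (dpath k) \<longleftrightarrow> j = Suc i \<and> i < k"
  unfolding dpath_def arcs_def by auto

lemma verts_quotient [simp]: "verts (quotient_digraph G r) = verts G // r"
  unfolding quotient_digraph_def verts_def by simp

lemma arcs_quotient [simp]:
  "(X, Y) \<in> arcs (quotient_digraph G r) \<longleftrightarrow>
     X \<in> verts G // r \<and> Y \<in> verts G // r \<and> (\<exists>x\<in>X. \<exists>y\<in>Y. (x, y) \<in> arcs G)"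
  unfolding quotient_digraph_def arcs_def by simp

lemma verts_dexp [simp]: "verts (dexp H K) = verts K \<rightarrow>\<^sub>E verts H"
  unfolding dexp_def verts_def by simp

lemma arcs_dexp:
  "(P, Q) \<in> arcs (dexp H K) \<longleftrightarrow> P \<in> verts K \<rightarrow>\<^sub>E verts H \<and> Q \<in> verts K \<rightarrow>\<^sub>E verts H \<and>
     (\<forall>x y. (x, y) \<in> arcs K \<longrightarrow> (P x, Q y) \<in> arcs H)"
  unfolding dexp_def arcs_def by simp

lemma wf_digraph_arcsD: "wf_digraph G \<Longrightarrow> (x, y) \<in> arcs G \<Longrightarrow> x \<in> verts G \<and> y \<in> verts G"
  unfolding wf_digraph_def by auto

lemma wf_dprod: "wf_digraph G \<Longrightarrow> wf_digraph H \<Longrightarrow> wf_digraph (dprod G H)"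
  unfolding wf_digraph_def dprod_def verts_def arcs_def by auto

lemma wf_Pn: "wf_digraph (Pn n)"
  unfolding wf_digraph_def Pn_def verts_def arcs_def by auto

definition induced :: "'b digraph \<Rightarrow> 'b set \<Rightarrow> 'b digraph" where
  "induced T S = (S, arcs T \<inter> (S \<times> S))"

lemma verts_induced [simp]: "verts (induced T S) = S"
  unfolding induced_def verts_def by simp

lemma arcs_induced [simp]: "arcs (induced T S) = arcs T \<inter> (S \<times> S)"
  unfolding induced_def arcs_def by simp

lemma hom_comp: "is_hom G H f \<Longrightarrow> is_hom H K g \<Longrightarrow> is_hom G K (g \<circ> f)"
  unfolding is_hom_def by auto

lemma hom_exists_trans: "G \<rightarrow>\<^sub>h H \<Longrightarrow> H \<rightarrow>\<^sub>h K \<Longrightarrow> G \<rightarrow>\<^sub>h K"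
  unfolding hom_exists_def using hom_comp by blast

lemma hom_exists_refl: "G \<rightarrow>\<^sub>h G"
  unfolding hom_exists_def is_hom_def by (metis id_apply)

lemma hom_fst: "is_hom (dprod G H) G fst"
  and hom_snd: "is_hom (dprod G H) H snd"
  unfolding is_hom_def by auto

lemma hom_pair: "is_hom G H a \<Longrightarrow> is_hom G H' b \<Longrightarrow> is_hom G (dprod H H') (\<lambda>x. (a x, b x))"
  unfolding is_hom_def by auto

lemma hom_induced: "is_hom T G g \<Longrightarrow> S \<subseteq> verts T \<Longrightarrow> is_hom (induced T S) G g"
  unfolding is_hom_def by auto

lemma hom_rtrancl:
  assumes "is_hom G G' f" and "(x, y) \<in> (arcs G)\<^sup>*"
  shows "(f x, f y) \<in> (arcs G')\<^sup>*"
  using assms(2)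
proof (induction rule: rtrancl_induct)
  case (step y z)
  then show ?case using assms(1) unfolding is_hom_def by (meson rtrancl_into_rtrancl)
qed simp

lemma hom_dexp_precomp:
  assumes wf: "wf_digraph K'" and \<beta>: "is_hom K' K \<beta>"
  shows "is_hom (dexp H K) (dexp H K') (\<lambda>P. restrict (P \<circ> \<beta>) (verts K'))"
  unfolding is_hom_def arcs_dexp verts_dexp
proof (intro conjI ballI allI impI)
  have \<beta>V: "\<beta> x \<in> verts K" if "x \<in> verts K'" for x
    using \<beta> that unfolding is_hom_def by blast
  show "restrict (P \<circ> \<beta>) (verts K') \<in> verts K' \<rightarrow>\<^sub>E verts H" if "P \<in> verts K \<rightarrow>\<^sub>E verts H" for P
    using that \<beta>V by auto
  fix P Q assume PQ: "P \<in> verts K \<rightarrow>\<^sub>E verts H \<and> Q \<in> verts K \<rightarrow>\<^sub>E verts H \<and>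
     (\<forall>x y. (x, y) \<in> arcs K \<longrightarrow> (P x, Q y) \<in> arcs H)"
  then show "restrict (P \<circ> \<beta>) (verts K') \<in> verts K' \<rightarrow>\<^sub>E verts H"
    and "restrict (Q \<circ> \<beta>) (verts K') \<in> verts K' \<rightarrow>\<^sub>E verts H"
    using \<beta>V by auto
  fix x y assume "(x, y) \<in> arcs K'"
  then show "(restrict (P \<circ> \<beta>) (verts K') x, restrict (Q \<circ> \<beta>) (verts K') y) \<in> arcs H"
    using PQ \<beta> wf_digraph_arcsD[OF wf] unfolding is_hom_def by auto
qed

section \<open>Oriented trees are balanced\<close>

abbreviation und_reach :: "'a digraph \<Rightarrow> ('a \<times> 'a) set" where
  "und_reach F \<equiv> {(a, b). und_adj F a b}\<^sup>*"

abbreviation walk :: "'a digraph \<Rightarrow> 'a list \<Rightarrow> bool" where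
  "walk T \<equiv> successively (und_adj T)"

definition sgn_arc :: "'a digraph \<Rightarrow> 'a \<Rightarrow> 'a \<Rightarrow> int" where
  "sgn_arc T a b = (if (a, b) \<in> arcs T then 1 else if (b, a) \<in> arcs T then -1 else 0)"

fun net_length :: "'a digraph \<Rightarrow> 'a list \<Rightarrow> int" where
  "net_length T (a # b # xs) = sgn_arc T a b + net_length T (b # xs)"
| "net_length T _ = 0"

lemma walk_append:
  "walk T (xs @ y # ys) \<longleftrightarrow> walk T (xs @ [y]) \<and> walk T (y # ys)"
  by (induction xs rule: induct_list012) auto

lemma walk_rev: "walk T (rev xs) \<longleftrightarrow> walk T xs"
proof -
  have "(\<lambda>x y. und_adj T y x) = und_adj T" by (auto simp: und_adj_def fun_eq_iff)
  then show ?thesis by (simp only: successively_rev)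
qed

lemma net_length_append:
  "net_length T (xs @ y # ys) = net_length T (xs @ [y]) + net_length T (y # ys)"
  by (induction xs rule: induct_list012) auto

lemma sgn_arc_swap:
  assumes "\<forall>x y. (x, y) \<in> arcs T \<longrightarrow> (y, x) \<notin> arcs T"
  shows "sgn_arc T b a = - sgn_arc T a b"
  using assms unfolding sgn_arc_def by auto

lemma net_length_rev:
  assumes "\<forall>x y. (x, y) \<in> arcs T \<longrightarrow> (y, x) \<notin> arcs T"
  shows "net_length T (rev xs) = - net_length T xs"
proof (induction xs rule: induct_list012)
  case (3 a b xs)
  have "net_length T (rev (a # b # xs)) = net_length T (rev (b # xs)) + sgn_arc T b a"
    using net_length_append[of T "rev xs" b "[a]"] by simp
  then show ?case using "3.IH"(2) sgn_arc_swap[OF assms, of b a] by simp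
qed simp_all

text \<open>A closed walk \<open>ys @ [x\<^sub>0]\<close> in an oriented tree whose vertices \<open>ys\<close> are distinct has net
  length zero: it is of the form \<open>a a\<close> or \<open>a b a\<close>, since otherwise it would be a cycle.\<close>

lemma distinct_closed_walk_net_length:
  assumes tree: "oriented_tree T" and walk: "walk T (ys @ [x0])"
    and ys: "ys \<noteq> []" "hd ys = x0" and dist: "distinct ys"
  shows "net_length T (ys @ [x0]) = 0"
proof -
  have anti: "\<forall>x y. (x, y) \<in> arcs T \<longrightarrow> (y, x) \<notin> arcs T"
    and acyclic: "\<not> (\<exists>xs. length xs \<ge> 3 \<and> distinct xs \<and>
          (\<forall>i<length xs. und_adj T (xs ! i) (xs ! ((i + 1) mod length xs))))"
    using tree unfolding oriented_tree_def by blast+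
  have cyc: "\<forall>i<length ys. und_adj T (ys ! i) (ys ! ((i + 1) mod length ys))"
  proof (intro allI impI)
    fix i assume i: "i < length ys"
    have "ys ! ((i + 1) mod length ys) = (ys @ [x0]) ! Suc i"
    proof (cases "Suc i < length ys")
      case True
      then show ?thesis by (simp add: nth_append)
    next
      case False
      then have "Suc i = length ys" using i by simp
      then show ?thesis using ys by (simp add: hd_conv_nth)
    qed
    moreover have "ys ! i = (ys @ [x0]) ! i" using i by (simp add: nth_append)
    ultimately show "und_adj T (ys ! i) (ys ! ((i + 1) mod length ys))"
      using successively_nth[OF walk, of i] i by simp
  qed
  have "\<not> length ys \<ge> 3" using acyclic dist cyc by blast
  then have "length ys \<le> 2" by simp
  then consider a where "ys = [a]" | a b where "ys = [a, b]"
    using ys(1) by (metis One_nat_def Suc_1 le_Suc_eq le_zero_eq length_0_conv length_Suc_conv)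
  then show ?thesis
  proof cases
    case (1 a)
    then show ?thesis using ys sgn_arc_swap[OF anti, of a a] by simp
  next
    case (2 a b)
    then show ?thesis using ys sgn_arc_swap[OF anti, of a b] by simp
  qed
qed

text \<open>By
  induction on the length: a closed walk that repeats a vertex splits into two shorter
  closed walks, and one that does not is covered by the previous lemma.\<close>

lemma closed_walk_net_length:
  assumes tree: "oriented_tree T"
  shows "walk T xs \<Longrightarrow> xs \<noteq> [] \<Longrightarrow> hd xs = last xs \<Longrightarrow> net_length T xs = 0"
proof (induction "length xs" arbitrary: xs rule: less_induct)
  case less
  define ys where "ys = butlast xs"
  define x0 where "x0 = hd xs"
  have xs: "xs = ys @ [x0]"
    using less.prems(2,3) unfolding ys_def x0_def by simp
  show ?case
  proof (cases "distinct ys")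
    case True
    show ?thesis
    proof (cases "ys = []")
      case True
      then show ?thesis using xs by simp
    next
      case False
      then have "hd ys = x0" using xs unfolding x0_def by (metis hd_append2)
      then show ?thesis
        using distinct_closed_walk_net_length[OF tree _ False _ \<open>distinct ys\<close>] less.prems(1) xs
        by simp
    qed
  next
    case False
    then obtain a v b c where ys_split: "ys = a @ [v] @ b @ [v] @ c"
      using not_distinct_decomp by blast
    have xs_split: "xs = a @ v # (b @ v # (c @ [x0]))"
      using xs ys_split by simp
    define loop where "loop = v # b @ [v]"
    define rest where "rest = a @ v # (c @ [x0])"
    have "walk T (a @ [v]) \<and> walk T loop \<and> walk T (v # c @ [x0])"
      using less.prems(1) walk_append[of T a v "b @ v # c @ [x0]"]
        walk_append[of T "v # b" v "c @ [x0]"]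
      unfolding xs_split loop_def by simp
    then have walks: "walk T loop" "walk T rest"
      unfolding rest_def using walk_append[of T a v "c @ [x0]"] by auto
    have "net_length T xs = net_length T (a @ [v]) + net_length T loop + net_length T (v # c @ [x0])"
      unfolding xs_split loop_def using net_length_append[of T a v "b @ v # c @ [x0]"]
        net_length_append[of T "v # b" v "c @ [x0]"] by simp
    also have "\<dots> = net_length T loop + net_length T rest"
      unfolding rest_def using net_length_append[of T a v "c @ [x0]"] by simp
    also have "net_length T loop = 0"
      using less.hyps[OF _ walks(1)] unfolding xs_split loop_def by simp
    also have "net_length T rest = 0"
    proof -
      have "hd (a @ v # b @ v # c @ [x0]) = x0" using xs_split x0_def by metis
      then have "hd rest = last rest" unfolding rest_def by (cases a) simp_all
      then show ?thesis using less.hyps[OF _ walks(2)] unfolding xs_split rest_def by simp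
    qed
    finally show ?thesis by simp
  qed
qed

lemma rtrancl_und_adj_walk:
  assumes "(x, y) \<in> und_reach T"
  shows "\<exists>xs. xs \<noteq> [] \<and> hd xs = x \<and> last xs = y \<and> walk T xs"
  using assms
proof (induction rule: rtrancl_induct)
  case base
  show ?case by (intro exI[of _ "[x]"]) simp
next
  case (step y z)
  then obtain xs where "xs \<noteq> []" "hd xs = x" "last xs = y" "walk T xs" by blast
  then show ?case
    using step.hyps(2) by (intro exI[of _ "xs @ [z]"]) (simp add: successively_append_iff)
qed

text \<open>Two walks from a common vertex \<open>r\<close> to the tail and the head of an arc differ in net
  length by one: together with the arc they form a closed walk.\<close>

lemma walks_to_arc_net_length:
  assumes tree: "oriented_tree T" and ab: "(a, b) \<in> arcs T"
    and wa: "walk T wa" "wa \<noteq> []" "hd wa = r" "last wa = a"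
    and wb: "walk T wb" "wb \<noteq> []" "hd wb = r" "last wb = b"
  shows "net_length T wb = net_length T wa + 1"
proof -
  have anti: "\<forall>x y. (x, y) \<in> arcs T \<longrightarrow> (y, x) \<notin> arcs T"
    using tree unfolding oriented_tree_def by blast
  define p where "p = butlast wa"
  define q where "q = tl (rev wb)"
  have p: "wa = p @ [a]" using wa append_butlast_last_id[of wa] unfolding p_def by simp
  have "rev wb \<noteq> []" "hd (rev wb) = b" using wb by (simp_all add: hd_rev)
  then have q: "rev wb = b # q" unfolding q_def using list.collapse[of "rev wb"] by simp
  define c where "c = p @ a # b # q"
  have "walk T (p @ [a])" "walk T (b # q)"
    using wa(1) wb(1) by (simp_all only: p walk_rev flip: q)
  then have walk_c: "walk T c"
    unfolding c_def using walk_append[of T p a "b # q"] ab by (simp add: und_adj_def)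
  have hd_c: "hd c = r" using wa p unfolding c_def by (cases p) auto
  have last_c: "last c = r"
  proof -
    have "last (rev wb) = r" using wb by (simp add: last_rev)
    then show ?thesis unfolding c_def q by simp
  qed
  have "net_length T c = 0"
    by (rule closed_walk_net_length[OF tree walk_c]) (simp add: c_def, simp add: hd_c last_c)
  moreover have "net_length T c = net_length T wa + 1 + net_length T (rev wb)"
    unfolding c_def p q using net_length_append[of T p a "b # q"] ab by (simp add: sgn_arc_def)
  ultimately show ?thesis using net_length_rev[OF anti] by simp
qed

text \<open>Hence an oriented tree has a level function rising by one along each arc: fix a
  root \<open>r\<close> and take the net length of a chosen walk from \<open>r\<close>.\<close>

lemma oriented_tree_level:
  assumes tree: "oriented_tree T"
  shows "\<exists>L :: 'a \<Rightarrow> int. \<forall>a b. (a, b) \<in> arcs T \<longrightarrow> L b = L a + 1"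
proof -
  have wf: "wf_digraph T" and ne: "verts T \<noteq> {}"
    and conn: "\<forall>x\<in>verts T. \<forall>y\<in>verts T. (x, y) \<in> und_reach T"
    using tree unfolding oriented_tree_def by blast+
  obtain r where r: "r \<in> verts T" using ne by blast
  define W where "W z = (SOME xs. xs \<noteq> [] \<and> hd xs = r \<and> last xs = z \<and> walk T xs)" for z
  have W: "W z \<noteq> [] \<and> hd (W z) = r \<and> last (W z) = z \<and> walk T (W z)" if "z \<in> verts T" for z
  proof -
    have "(r, z) \<in> und_reach T" using conn r that by blast
    then have "\<exists>xs. xs \<noteq> [] \<and> hd xs = r \<and> last xs = z \<and> walk T xs"
      by (rule rtrancl_und_adj_walk)
    then show ?thesis unfolding W_def by (rule someI_ex)
  qed
  have "net_length T (W b) = net_length T (W a) + 1" if ab: "(a, b) \<in> arcs T" for a b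
  proof -
    have "a \<in> verts T" "b \<in> verts T" using wf_digraph_arcsD[OF wf ab] by auto
    then show ?thesis using walks_to_arc_net_length[OF tree ab] W by blast
  qed
  then show ?thesis by (intro exI[of _ "\<lambda>z. net_length T (W z)"]) blast
qed

text \<open>A finite digraph with an integer level function rising by one along each arc
  maps to a directed path: shift the levels so that the minimum is zero.\<close>

lemma level_to_dpath:
  assumes wf: "wf_digraph T" and L: "\<forall>a b. (a, b) \<in> arcs T \<longrightarrow> L b = L a + (1 :: int)"
  shows "\<exists>k l. is_hom T (dpath k) l"
proof -
  have fin: "finite (L ` verts T)" using wf unfolding wf_digraph_def by simp
  define m where "m = Min (L ` verts T)"
  define k where "k = nat (Max (L ` verts T) - m)"
  have bounds: "m \<le> L z \<and> L z \<le> Max (L ` verts T)" if "z \<in> verts T" for z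
    unfolding m_def using fin that by simp
  have "is_hom T (dpath k) (\<lambda>z. nat (L z - m))"
    unfolding is_hom_def k_def
  proof (intro conjI ballI allI impI)
    fix z assume "z \<in> verts T"
    then have "L z - m \<le> Max (L ` verts T) - m" using bounds by simp
    then show "nat (L z - m) \<in> verts (dpath (nat (Max (L ` verts T) - m)))"
      by (simp add: nat_mono)
  next
    fix a b assume ab: "(a, b) \<in> arcs T"
    have "m \<le> L a" "L b \<le> Max (L ` verts T)"
      using bounds wf_digraph_arcsD[OF wf ab] by auto
    then show "(nat (L a - m), nat (L b - m)) \<in> arcs (dpath (nat (Max (L ` verts T) - m)))"
      using L ab by simp
  qed
  then show ?thesis by blast
qed

lemma oriented_tree_height_hom:
  assumes "oriented_tree T"
  shows "\<exists>l. is_hom T (dpath (alg_height T)) l"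
proof -
  obtain L :: "'a \<Rightarrow> int" where L: "\<forall>a b. (a, b) \<in> arcs T \<longrightarrow> L b = L a + 1"
    using oriented_tree_level[OF assms] by blast
  have "wf_digraph T" using assms unfolding oriented_tree_def by blast
  then obtain k l where "is_hom T (dpath k) l" using level_to_dpath[OF _ L] by blast
  then have "T \<rightarrow>\<^sub>h dpath k" unfolding hom_exists_def by blast
  then have "T \<rightarrow>\<^sub>h dpath (alg_height T)" unfolding alg_height_def by (rule LeastI)
  then show ?thesis unfolding hom_exists_def .
qed

lemma alg_height_le:
  assumes "is_hom T (dpath k) l"
  shows "alg_height T \<le> k"
proof -
  have "T \<rightarrow>\<^sub>h dpath k" using assms unfolding hom_exists_def by blast
  then show ?thesis unfolding alg_height_def by (rule Least_le)
qed

lemma obstruction_not_hom: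
  assumes "complete_obstructions H \<F>" and "F \<in> \<F>"
  shows "\<not> F \<rightarrow>\<^sub>h H"
  using assms hom_exists_refl unfolding complete_obstructions_def by blast

text \<open>Obstruction sets only test digraphs on natural-number vertices; every finite
  digraph is homomorphically equivalent (indeed isomorphic) to such a digraph.\<close>

lemma nat_copy:
  fixes G :: "'b digraph"
  assumes "wf_digraph G"
  shows "\<exists>G' :: nat digraph. wf_digraph G' \<and> G \<rightarrow>\<^sub>h G' \<and> G' \<rightarrow>\<^sub>h G"
proof -
  obtain N and f :: "nat \<Rightarrow> 'b" where f: "verts G = f ` {i. i < N}" "inj_on f {i. i < N}"
    using finite_imp_nat_seg_image_inj_on assms unfolding wf_digraph_def by metis
  define G' where "G' = ({i. i < N}, {(i, j). i < N \<and> j < N \<and> (f i, f j) \<in> arcs G})"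
  define g where "g = the_inv_into {i. i < N} f"
  have G': "verts G' = {i. i < N}" "arcs G' = {(i, j). i < N \<and> j < N \<and> (f i, f j) \<in> arcs G}"
    unfolding G'_def verts_def arcs_def by auto
  have g: "g x < N" "f (g x) = x" if "x \<in> verts G" for x
    using f that unfolding g_def by (auto simp: the_inv_into_f_f)
  have "wf_digraph G'" unfolding wf_digraph_def G' by auto
  moreover have "is_hom G' G f" unfolding is_hom_def G' using f by auto
  moreover have "is_hom G G' g"
    unfolding is_hom_def G' using g wf_digraph_arcsD[OF assms] by auto
  ultimately show ?thesis unfolding hom_exists_def by blast
qed

abbreviation cylinder :: "'a digraph \<Rightarrow> nat \<Rightarrow> (('a \<times> 'a) \<times> nat) digraph" where
  "cylinder H n \<equiv> dprod (dprod H H) (Pn n)"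

lemma crush_rel_subset: "crush_rel H n \<subseteq> verts (cylinder H n) \<times> verts (cylinder H n)"
  unfolding crush_rel_def by auto

lemma wf_crushed_cylinder:
  assumes "wf_digraph H"
  shows "wf_digraph (crushed_cylinder H n)"
proof -
  have "finite (verts (cylinder H n))" using assms unfolding wf_digraph_def by simp
  then have "finite (verts (crushed_cylinder H n))"
    unfolding crushed_cylinder_def verts_quotient using crush_rel_subset by (rule finite_quotient)
  then show ?thesis unfolding wf_digraph_def crushed_cylinder_def by auto
qed

lemma crushed_class:
  assumes "X \<in> verts (crushed_cylinder H n)"
  shows "X \<noteq> {}" and "X \<subseteq> verts (cylinder H n)"
    and "\<And>x y. x \<in> X \<Longrightarrow> y \<in> X \<Longrightarrow> snd x = snd y \<and>
          (snd x \<noteq> n \<longrightarrow> fst (fst x) = fst (fst y)) \<and> (snd x \<noteq> 0 \<longrightarrow> snd (fst x) = snd (fst y))"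
proof -
  obtain x0 where x0: "x0 \<in> verts (cylinder H n)" and X: "X = crush_rel H n `` {x0}"
    using assms unfolding crushed_cylinder_def by (auto simp: quotient_def)
  have "(x0, x0) \<in> crush_rel H n" using x0 unfolding crush_rel_def by (cases x0) auto
  then show "X \<noteq> {}" using X by auto
  show "X \<subseteq> verts (cylinder H n)" using X crush_rel_subset[of H n] by blast
  fix x y assume "x \<in> X" "y \<in> X"
  then have "(x0, x) \<in> crush_rel H n" "(x0, y) \<in> crush_rel H n" using X by auto
  then show "snd x = snd y \<and> (snd x \<noteq> n \<longrightarrow> fst (fst x) = fst (fst y)) \<and>
      (snd x \<noteq> 0 \<longrightarrow> snd (fst x) = snd (fst y))"
    unfolding crush_rel_def by auto
qed

text \<open>Well-defined data of a vertex of the crushed cylinder, read off from an arbitrary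
  representative: its level, and its bottom and top coordinates (meaningful away from
  level \<open>n\<close>, respectively level \<open>0\<close>).\<close>

definition cyl_level :: "(('a \<times> 'a) \<times> nat) set \<Rightarrow> nat" where
  "cyl_level X = snd (SOME x. x \<in> X)"

definition cyl_bot :: "(('a \<times> 'a) \<times> nat) set \<Rightarrow> 'a" where
  "cyl_bot X = fst (fst (SOME x. x \<in> X))"

definition cyl_top :: "(('a \<times> 'a) \<times> nat) set \<Rightarrow> 'a" where
  "cyl_top X = snd (fst (SOME x. x \<in> X))"

lemma crushed_cylinder_vertex:
  assumes "X \<in> verts (crushed_cylinder H n)"
  shows "cyl_bot X \<in> verts H" and "cyl_top X \<in> verts H"
proof -
  have "(SOME x. x \<in> X) \<in> verts (cylinder H n)"
    using crushed_class(1,2)[OF assms] by (metis some_in_eq subsetD)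
  then show "cyl_bot X \<in> verts H" "cyl_top X \<in> verts H"
    unfolding cyl_bot_def cyl_top_def by auto
qed

lemma crushed_cylinder_arc:
  assumes XY: "(X, Y) \<in> arcs (crushed_cylinder H n)"
  shows "(cyl_level X, cyl_level Y) \<in> arcs (Pn n)"
    and "cyl_level X \<noteq> n \<Longrightarrow> cyl_level Y \<noteq> n \<Longrightarrow> (cyl_bot X, cyl_bot Y) \<in> arcs H"
    and "cyl_level X \<noteq> 0 \<Longrightarrow> cyl_level Y \<noteq> 0 \<Longrightarrow> (cyl_top X, cyl_top Y) \<in> arcs H"
proof -
  have X: "X \<in> verts (crushed_cylinder H n)" and Y: "Y \<in> verts (crushed_cylinder H n)"
    using XY unfolding crushed_cylinder_def by auto
  obtain x y where x: "x \<in> X" and y: "y \<in> Y" and xy: "(x, y) \<in> arcs (cylinder H n)"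
    using XY unfolding crushed_cylinder_def by auto
  define x' y' where "x' = (SOME x. x \<in> X)" and "y' = (SOME y. y \<in> Y)"
  have x': "x' \<in> X" and y': "y' \<in> Y"
    unfolding x'_def y'_def using crushed_class(1)[OF X] crushed_class(1)[OF Y] by (auto intro: someI)
  have cx: "snd x' = snd x \<and> (snd x' \<noteq> n \<longrightarrow> fst (fst x') = fst (fst x)) \<and>
        (snd x' \<noteq> 0 \<longrightarrow> snd (fst x') = snd (fst x))"
    and cy: "snd y' = snd y \<and> (snd y' \<noteq> n \<longrightarrow> fst (fst y') = fst (fst y)) \<and>
        (snd y' \<noteq> 0 \<longrightarrow> snd (fst y') = snd (fst y))"
    using crushed_class(3)[OF X x' x] crushed_class(3)[OF Y y' y] by simp_all
  obtain u v i u' v' j where "x = ((u, v), i)" "y = ((u', v'), j)" by (metis prod.collapse)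
  then have arcs: "(snd x, snd y) \<in> arcs (Pn n)" "(fst (fst x), fst (fst y)) \<in> arcs H"
      "(snd (fst x), snd (fst y)) \<in> arcs H"
    using xy by simp_all
  show "(cyl_level X, cyl_level Y) \<in> arcs (Pn n)"
    using arcs cx cy unfolding cyl_level_def x'_def y'_def by simp
  show "cyl_level X \<noteq> n \<Longrightarrow> cyl_level Y \<noteq> n \<Longrightarrow> (cyl_bot X, cyl_bot Y) \<in> arcs H"
    using arcs cx cy unfolding cyl_level_def cyl_bot_def x'_def y'_def by simp
  show "cyl_level X \<noteq> 0 \<Longrightarrow> cyl_level Y \<noteq> 0 \<Longrightarrow> (cyl_top X, cyl_top Y) \<in> arcs H"
    using arcs cx cy unfolding cyl_level_def cyl_top_def x'_def y'_def by simp
qed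

section \<open>Bounded height implies a homomorphism from a crushed cylinder\<close>

text \<open>If \<open>\<psi>\<close> takes the value \<open>0\<close> somewhere, then within that component \<open>\<psi>\<close> is bounded
  by the height, since \<open>\<psi>\<close> can only climb one level per forward arc and, below \<open>n\<close>,
  must descend one level per backward arc unless it stays at \<open>0\<close>.\<close>

lemma Pn_level_le_height:
  assumes wf: "wf_digraph F" and l: "is_hom F (dpath k) l" and kn: "k < n"
    and \<psi>: "\<And>a b. (a, b) \<in> arcs F \<Longrightarrow> (\<psi> a, \<psi> b) \<in> arcs (Pn n)"
    and x0: "x0 \<in> verts F" "\<psi> x0 = 0" and z: "(x0, z) \<in> und_reach F"
  shows "\<psi> z \<le> l z"
proof -
  have lstep: "l b = Suc (l a)" if "(a, b) \<in> arcs F" for a b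
    using l that unfolding is_hom_def by auto
  have lbound: "l z \<le> k" if "z \<in> verts F" for z
    using l that unfolding is_hom_def by auto
  from z have "\<psi> z \<le> l z \<and> z \<in> verts F"
  proof (induction rule: rtrancl_induct)
    case base
    then show ?case using x0 by simp
  next
    case (step y z)
    then have y: "y \<in> verts F" "\<psi> y \<le> l y" by auto
    then have "\<psi> y < n" using lbound kn by fastforce
    from step.hyps(2) consider "(y, z) \<in> arcs F" | "(z, y) \<in> arcs F"
      unfolding und_adj_def by auto
    then show ?case
    proof cases
      case 1
      then show ?thesis using \<psi>[OF 1] lstep[OF 1] y \<open>\<psi> y < n\<close> wf_digraph_arcsD[OF wf] by auto
    next
      case 2
      then show ?thesis using \<psi>[OF 2] lstep[OF 2] y \<open>\<psi> y < n\<close> wf_digraph_arcsD[OF wf] by auto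
    qed
  qed
  then show ?thesis by blast
qed

text \<open>A connected digraph of height below \<open>n\<close> that maps to the crushed cylinder
  \<open>H\<^sub>n\<^sup>*\<close> maps to \<open>H\<close>: its image avoids level \<open>n\<close> or level \<open>0\<close>, and accordingly the
  bottom or the top coordinate is a homomorphism to \<open>H\<close>.\<close>

lemma low_height_crushed_cylinder_hom:
  assumes wf: "wf_digraph F" and conn: "\<forall>x\<in>verts F. \<forall>y\<in>verts F. (x, y) \<in> und_reach F"
    and l: "is_hom F (dpath k) l" and kn: "k < n"
    and \<phi>: "is_hom F (crushed_cylinder H n) \<phi>"
  shows "F \<rightarrow>\<^sub>h H"
proof -
  define \<psi> where "\<psi> z = cyl_level (\<phi> z)" for z
  have \<phi>V: "\<phi> z \<in> verts (crushed_cylinder H n)" if "z \<in> verts F" for z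
    using \<phi> that unfolding is_hom_def by blast
  have \<phi>A: "(\<phi> a, \<phi> b) \<in> arcs (crushed_cylinder H n)" if "(a, b) \<in> arcs F" for a b
    using \<phi> that unfolding is_hom_def by blast
  have \<psi>: "(\<psi> a, \<psi> b) \<in> arcs (Pn n)" if "(a, b) \<in> arcs F" for a b
    unfolding \<psi>_def using crushed_cylinder_arc(1)[OF \<phi>A[OF that]] .
  have "(\<forall>z\<in>verts F. \<psi> z \<noteq> n) \<or> (\<forall>z\<in>verts F. \<psi> z \<noteq> 0)"
  proof (cases "\<exists>x0\<in>verts F. \<psi> x0 = 0")
    case True
    then obtain x0 where x0: "x0 \<in> verts F" "\<psi> x0 = 0" by blast
    have "\<psi> z < n" if z: "z \<in> verts F" for z
    proof -
      have "\<psi> z \<le> l z"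
        using Pn_level_le_height[where \<psi> = \<psi>, OF wf l kn \<psi> x0] conn x0(1) z by blast
      moreover have "l z \<le> k" using l z unfolding is_hom_def by auto
      ultimately show ?thesis using kn by simp
    qed
    then show ?thesis by auto
  qed auto
  then show ?thesis
  proof
    assume "\<forall>z\<in>verts F. \<psi> z \<noteq> n"
    then have "is_hom F H (cyl_bot \<circ> \<phi>)"
      using crushed_cylinder_vertex(1)[OF \<phi>V] crushed_cylinder_arc(2)[OF \<phi>A] wf_digraph_arcsD[OF wf]
      unfolding is_hom_def \<psi>_def by simp
    then show ?thesis unfolding hom_exists_def by blast
  next
    assume "\<forall>z\<in>verts F. \<psi> z \<noteq> 0"
    then have "is_hom F H (cyl_top \<circ> \<phi>)"
      using crushed_cylinder_vertex(2)[OF \<phi>V] crushed_cylinder_arc(3)[OF \<phi>A] wf_digraph_arcsD[OF wf]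
      unfolding is_hom_def \<psi>_def by simp
    then show ?thesis unfolding hom_exists_def by blast
  qed
qed

text \<open>(1) \<open>\<Longrightarrow>\<close> (2): if all obstructions have height at most \<open>m\<close>, then no obstruction maps
  to \<open>H\<^sub>m\<^sub>+\<^sub>1\<^sup>*\<close> (it would map to \<open>H\<close>), so \<open>H\<^sub>m\<^sub>+\<^sub>1\<^sup>* \<rightarrow> H\<close>.\<close>

lemma bounded_height_imp_crushed_cylinder_hom:
  assumes wfH: "wf_digraph H" and bh: "bounded_height_tree_duality H"
  shows "\<exists>n\<ge>1. crushed_cylinder H n \<rightarrow>\<^sub>h H"
proof -
  obtain m \<F> where co: "complete_obstructions H \<F>"
    and tr: "\<forall>F\<in>\<F>. oriented_tree F \<and> alg_height F \<le> m"
    using bh unfolding bounded_height_tree_duality_def by blast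
  let ?Q = "crushed_cylinder H (Suc m)"
  obtain G :: "nat digraph" where G: "wf_digraph G" "?Q \<rightarrow>\<^sub>h G" "G \<rightarrow>\<^sub>h ?Q"
    using nat_copy[OF wf_crushed_cylinder[OF wfH]] by blast
  have "\<not> F \<rightarrow>\<^sub>h G" if F: "F \<in> \<F>" for F
  proof
    assume "F \<rightarrow>\<^sub>h G"
    then obtain \<phi> where \<phi>: "is_hom F ?Q \<phi>"
      using G(3) hom_exists_trans unfolding hom_exists_def by blast
    have tree: "oriented_tree F" and height: "alg_height F < Suc m" using tr F by auto
    obtain l where l: "is_hom F (dpath (alg_height F)) l"
      using oriented_tree_height_hom[OF tree] by blast
    have "F \<rightarrow>\<^sub>h H"
      using low_height_crushed_cylinder_hom[OF _ _ l height \<phi>] tree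
      unfolding oriented_tree_def by blast
    then show False using obstruction_not_hom[OF co F] by blast
  qed
  then have "G \<rightarrow>\<^sub>h H" using co G(1) unfolding complete_obstructions_def by blast
  then have "?Q \<rightarrow>\<^sub>h H" using G(2) by (rule hom_exists_trans[rotated])
  then show ?thesis by (intro exI[of _ "Suc m"]) simp
qed

section \<open>A homomorphism from a crushed cylinder yields a walk from \<open>\<pi>\<^sub>1\<close> to \<open>\<pi>\<^sub>2\<close>\<close>

lemma crush_rel_equiv:
  assumes "n \<ge> 1"
  shows "equiv (verts (cylinder H n)) (crush_rel H n)"
proof (rule equivI)
  show "refl_on (verts (cylinder H n)) (crush_rel H n)"
    unfolding refl_on_def crush_rel_def by auto
  show "sym (crush_rel H n)" unfolding sym_def crush_rel_def by auto
  show "trans (crush_rel H n)" unfolding trans_def crush_rel_def using assms by auto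
qed (rule crush_rel_subset)

lemma quotient_map_hom:
  assumes "equiv (verts G) r" and "wf_digraph G"
  shows "is_hom G (quotient_digraph G r) (\<lambda>x. r `` {x})"
  unfolding is_hom_def arcs_quotient verts_quotient
  using equiv_class_self[OF assms(1)] wf_digraph_arcsD[OF assms(2)] by (blast intro: quotientI)

lemma layers_walk:
  assumes wf: "wf_digraph K" and \<psi>: "is_hom (dprod K (Pn n)) H \<psi>"
  shows "(restrict (\<lambda>p. \<psi> (p, 0)) (verts K), restrict (\<lambda>p. \<psi> (p, n)) (verts K))
           \<in> (arcs (dexp H K))\<^sup>*"
proof -
  define f where "f i = restrict (\<lambda>p. \<psi> (p, i)) (verts K)" for i
  have "(f i, f (Suc i)) \<in> arcs (dexp H K)" if "i < n" for i
    unfolding arcs_dexp f_def using \<psi> that wf_digraph_arcsD[OF wf]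
    unfolding is_hom_def by (auto simp del: arcs_dprod simp add: arcs_dprod[of _ i _ "Suc i"])
  then have "(f 0, f n) \<in> arcs (dexp H K) ^^ n" unfolding relpow_fun_conv by blast
  then show ?thesis unfolding f_def by (rule relpow_imp_rtrancl)
qed

text \<open>Every endomorphism of a core has an endomorphism as right inverse, since it is an
  automorphism: the inverse bijection reflects arcs.\<close>

lemma core_right_inverse:
  assumes core: "is_core H" and g: "is_hom H H g"
  shows "\<exists>g'. is_hom H H g' \<and> (\<forall>u\<in>verts H. g (g' u) = u)"
proof -
  have wf: "wf_digraph H" and aut: "is_automorphism H g"
    using core g unfolding is_core_def by auto
  then have bij: "bij_betw g (verts H) (verts H)"
    and refl: "\<And>x y. x \<in> verts H \<Longrightarrow> y \<in> verts H \<Longrightarrow> (g x, g y) \<in> arcs H \<Longrightarrow> (x, y) \<in> arcs H"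
    unfolding is_automorphism_def by blast+
  define g' where "g' = inv_into (verts H) g"
  have g'V: "g' u \<in> verts H" and gg': "g (g' u) = u" if "u \<in> verts H" for u
    unfolding g'_def using bij_betwE[OF bij_betw_inv_into[OF bij]] bij_betw_inv_into_right[OF bij] that
    by auto
  have "is_hom H H g'"
    unfolding is_hom_def
  proof (intro conjI ballI allI impI)
    fix x y assume "(x, y) \<in> arcs H"
    then show "(g' x, g' y) \<in> arcs H"
      using refl[OF g'V g'V] gg' wf_digraph_arcsD[OF wf] by metis
  qed (rule g'V)
  then show ?thesis using gg' by blast
qed

lemma crushed_cylinder_hom_to_cylinder:
  assumes wfH: "wf_digraph H" and n: "n \<ge> 1" and \<phi>: "is_hom (crushed_cylinder H n) H' \<phi>"
  shows "\<exists>\<psi>. is_hom (cylinder H n) H' \<psi> \<and> (\<forall>u\<in>verts H. \<forall>v\<in>verts H.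
           \<psi> ((u, v), 0) = \<psi> ((u, u), 0) \<and> \<psi> ((u, v), n) = \<psi> ((v, v), n))"
proof -
  define \<psi> where "\<psi> x = \<phi> (crush_rel H n `` {x})" for x
  have "is_hom (cylinder H n) H' \<psi>"
    unfolding \<psi>_def
    using hom_comp[OF quotient_map_hom[OF crush_rel_equiv[OF n] wf_dprod[OF wf_dprod[OF wfH wfH] wf_Pn]]]
      \<phi>[unfolded crushed_cylinder_def] by (simp add: comp_def)
  moreover have "\<psi> ((u, v), 0) = \<psi> ((u, u), 0) \<and> \<psi> ((u, v), n) = \<psi> ((v, v), n)"
    if "u \<in> verts H" "v \<in> verts H" for u v
  proof -
    have "(((u, v), 0), ((u, u), 0)) \<in> crush_rel H n" "(((u, v), n), ((v, v), n)) \<in> crush_rel H n"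
      using that unfolding crush_rel_def by auto
    then show ?thesis
      unfolding \<psi>_def using equiv_class_eq[OF crush_rel_equiv[OF n, of H]] by simp
  qed
  ultimately show ?thesis by blast
qed

text \<open>In \<open>H\<^sup>H\<^sup>\<times>\<^sup>H\<close> for a core \<open>H\<close>, a walk from \<open>g \<circ> \<pi>\<^sub>1\<close> to \<open>h \<circ> \<pi>\<^sub>2\<close>, with \<open>g, h\<close> endomorphisms,
  can be straightened into a walk from \<open>\<pi>\<^sub>1\<close> to \<open>\<pi>\<^sub>2\<close>: precompose it with \<open>g' \<times> h'\<close>, where
  \<open>g', h'\<close> are right inverses of \<open>g, h\<close>.\<close>

lemma core_untwist_walk:
  assumes core: "is_core H" and g: "is_hom H H g" and h: "is_hom H H h"
    and walk: "(P, Q) \<in> (arcs (dexp H (dprod H H)))\<^sup>*"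
    and P: "\<And>u v. u \<in> verts H \<Longrightarrow> v \<in> verts H \<Longrightarrow> P (u, v) = g u"
    and Q: "\<And>u v. u \<in> verts H \<Longrightarrow> v \<in> verts H \<Longrightarrow> Q (u, v) = h v"
  shows "(proj1 H, proj2 H) \<in> (arcs (dexp H (dprod H H)))\<^sup>*"
proof -
  let ?V = "verts (dprod H H)"
  have wfH: "wf_digraph H" using core unfolding is_core_def by blast
  have wf2: "wf_digraph (dprod H H)" using wf_dprod[OF wfH wfH] .
  obtain g' h' where g': "is_hom H H g'" "\<forall>u\<in>verts H. g (g' u) = u"
    and h': "is_hom H H h'" "\<forall>u\<in>verts H. h (h' u) = u"
    using core_right_inverse[OF core] g h by metis
  define \<beta> where "\<beta> x = (g' (fst x), h' (snd x))" for x
  have \<beta>: "is_hom (dprod H H) (dprod H H) \<beta>"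
    unfolding \<beta>_def using hom_pair[OF hom_comp[OF hom_fst g'(1)] hom_comp[OF hom_snd h'(1)]]
    by (simp add: comp_def)
  have \<beta>V: "g' (fst x) \<in> verts H" "h' (snd x) \<in> verts H" if "x \<in> ?V" for x
    using that g'(1) h'(1) unfolding is_hom_def by auto
  have "(restrict (P \<circ> \<beta>) ?V, restrict (Q \<circ> \<beta>) ?V) \<in> (arcs (dexp H (dprod H H)))\<^sup>*"
    using hom_rtrancl[OF hom_dexp_precomp[OF wf2 \<beta>] walk] .
  moreover have "restrict (P \<circ> \<beta>) ?V = proj1 H"
    unfolding proj1_def using P[OF \<beta>V] g'(2) by (intro restrict_ext) (auto simp: \<beta>_def)
  moreover have "restrict (Q \<circ> \<beta>) ?V = proj2 H"
    unfolding proj2_def using Q[OF \<beta>V] h'(2) by (intro restrict_ext) (auto simp: \<beta>_def)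
  ultimately show ?thesis by simp
qed

text \<open>(2) \<open>\<Longrightarrow>\<close> (3): the layers of the induced homomorphism from the cylinder form a walk
  from \<open>g \<circ> \<pi>\<^sub>1\<close> to \<open>h \<circ> \<pi>\<^sub>2\<close>, where \<open>g\<close> and \<open>h\<close> are its restrictions to the diagonals of the
  bottom and the top layer.\<close>

lemma crushed_cylinder_hom_imp_walk:
  assumes core: "is_core H" and n: "n \<ge> 1" and Q: "crushed_cylinder H n \<rightarrow>\<^sub>h H"
  shows "(proj1 H, proj2 H) \<in> (arcs (dexp H (dprod H H)))\<^sup>*"
proof -
  have wfH: "wf_digraph H" using core unfolding is_core_def by blast
  obtain \<psi> where \<psi>: "is_hom (cylinder H n) H \<psi>"
    and ends: "\<forall>u\<in>verts H. \<forall>v\<in>verts H. \<psi> ((u, v), 0) = \<psi> ((u, u), 0) \<and> \<psi> ((u, v), n) = \<psi> ((v, v), n)"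
    using crushed_cylinder_hom_to_cylinder[OF wfH n] Q unfolding hom_exists_def by blast
  let ?V = "verts (dprod H H)"
  have diag: "is_hom H H (\<lambda>u. \<psi> ((u, u), i))" if "i = 0 \<or> i = n" for i
    using hom_comp[OF _ \<psi>, of H "\<lambda>u. ((u, u), i)"] that unfolding is_hom_def by (auto simp: comp_def)
  have layer: "restrict (\<lambda>p. \<psi> (p, 0)) ?V (u, v) = \<psi> ((u, u), 0)"
    "restrict (\<lambda>p. \<psi> (p, n)) ?V (u, v) = \<psi> ((v, v), n)"
    if "u \<in> verts H" "v \<in> verts H" for u v
  proof -
    have "(u, v) \<in> ?V" using that by simp
    then show "restrict (\<lambda>p. \<psi> (p, 0)) ?V (u, v) = \<psi> ((u, u), 0)"
      "restrict (\<lambda>p. \<psi> (p, n)) ?V (u, v) = \<psi> ((v, v), n)"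
      by (simp_all only: restrict_apply') (use ends that in blast)+
  qed
  show ?thesis
    using core_untwist_walk[OF core diag diag layers_walk[OF wf_dprod[OF wfH wfH] \<psi>] layer] by simp
qed

section \<open>A walk from \<open>\<pi>\<^sub>1\<close> to \<open>\<pi>\<^sub>2\<close> yields bounded-height tree duality\<close>

text \<open>Since \<open>\<pi>\<^sub>1\<close> carries a loop in \<open>H\<^sup>H\<^sup>\<times>\<^sup>H\<close>, a walk from \<open>\<pi>\<^sub>1\<close> to \<open>\<pi>\<^sub>2\<close> may be taken of
  positive length.\<close>

lemma relpow_positive_from_loop:
  assumes "(x, x) \<in> R" and "(x, y) \<in> R\<^sup>*"
  shows "\<exists>n\<ge>1. (x, y) \<in> R ^^ n"
proof -
  obtain m where "(x, y) \<in> R ^^ m" using assms(2) rtrancl_power by blast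
  then have "(x, y) \<in> R ^^ Suc m" by (rule relpow_Suc_I2[OF assms(1)])
  moreover have "Suc m \<ge> 1" by simp
  ultimately show ?thesis by blast
qed

lemma proj1_loop:
  assumes "wf_digraph H"
  shows "(proj1 H, proj1 H) \<in> arcs (dexp H (dprod H H))"
  unfolding arcs_dexp proj1_def using wf_digraph_arcsD[OF wf_dprod[OF assms assms]] by auto

definition component :: "'b digraph \<Rightarrow> 'b set \<Rightarrow> 'b \<Rightarrow> 'b set" where
  "component T S x = und_reach (induced T S) `` {x}"

lemma component_self: "x \<in> component T S x"
  unfolding component_def by simp

lemma component_subset:
  assumes "x \<in> S"
  shows "component T S x \<subseteq> S"
proof
  fix y assume "y \<in> component T S x"
  then have "(x, y) \<in> und_reach (induced T S)" unfolding component_def by simp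
  then show "y \<in> S" using assms by (induction rule: rtrancl_induct) (auto simp: und_adj_def)
qed

lemma component_eq:
  assumes "(a, b) \<in> arcs T" "a \<in> S" "b \<in> S"
  shows "component T S a = component T S b"
proof -
  have "(a, b) \<in> {(a, b). und_adj (induced T S) a b}" "(b, a) \<in> {(a, b). und_adj (induced T S) a b}"
    using assms by (auto simp: und_adj_def)
  then show ?thesis unfolding component_def
    by (auto intro: converse_rtrancl_into_rtrancl)
qed

lemma components_hom:
  assumes "\<forall>x\<in>S. induced T (component T S x) \<rightarrow>\<^sub>h H"
  shows "induced T S \<rightarrow>\<^sub>h H"
proof -
  define A where "A x = (SOME g. is_hom (induced T (component T S x)) H g)" for x
  have A: "is_hom (induced T (component T S x)) H (A x)" if "x \<in> S" for x
    unfolding A_def using assms that someI_ex unfolding hom_exists_def by metis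
  have "is_hom (induced T S) H (\<lambda>z. A z z)"
    unfolding is_hom_def
  proof (intro conjI ballI allI impI)
    fix z assume "z \<in> verts (induced T S)"
    then show "A z z \<in> verts H" using A component_self unfolding is_hom_def by fastforce
  next
    fix a b assume "(a, b) \<in> arcs (induced T S)"
    then have ab: "(a, b) \<in> arcs T" "a \<in> S" "b \<in> S" by auto
    have same: "component T S b = component T S a" using component_eq[OF ab] by simp
    then have "(a, b) \<in> arcs (induced T (component T S a))"
      using ab(1) component_self[of a T S] component_self[of b T S] by simp
    then have "(A a a, A a b) \<in> arcs H" using A[OF ab(2)] unfolding is_hom_def by blast
    moreover have "A b = A a" unfolding A_def same ..
    ultimately show "(A a a, A b b) \<in> arcs H" by simp
  qed
  then show ?thesis unfolding hom_exists_def by blast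
qed

lemma component_oriented_tree:
  assumes tree: "oriented_tree T" and x: "x \<in> S" and S: "S \<subseteq> verts T"
  shows "oriented_tree (induced T (component T S x))"
proof -
  let ?C = "component T S x"
  have CS: "?C \<subseteq> S" using component_subset[OF x] .
  have "finite (verts T)" using tree unfolding oriented_tree_def wf_digraph_def by blast
  then have wf: "wf_digraph (induced T ?C)"
    unfolding wf_digraph_def using CS S by (auto intro: finite_subset)
  have to_C: "(x, y) \<in> und_reach (induced T ?C)" if "(x, y) \<in> und_reach (induced T S)" for y
    using that
  proof (induction rule: rtrancl_induct)
    case (step y z)
    have "y \<in> ?C" "z \<in> ?C" using step.hyps unfolding component_def by (auto intro: rtrancl_into_rtrancl)
    then have "und_adj (induced T ?C) y z" using step.hyps(2) by (auto simp: und_adj_def)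
    then show ?case using step.IH by (auto intro: rtrancl_into_rtrancl)
  qed simp
  have "sym {(a, b). und_adj (induced T ?C) a b}" unfolding sym_def by (auto simp: und_adj_def)
  then have sym: "sym (und_reach (induced T ?C))" by (rule sym_rtrancl)
  have conn: "(a, b) \<in> und_reach (induced T ?C)" if "a \<in> ?C" "b \<in> ?C" for a b
  proof -
    have "(x, a) \<in> und_reach (induced T ?C)" "(x, b) \<in> und_reach (induced T ?C)"
      using to_C that unfolding component_def by auto
    then show ?thesis using sym unfolding sym_def by (blast intro: rtrancl_trans)
  qed
  have adj: "und_adj (induced T ?C) a b \<Longrightarrow> und_adj T a b" for a b
    unfolding und_adj_def by auto
  show ?thesis unfolding oriented_tree_def
    using tree wf conn component_self[of x T S] adj
    unfolding oriented_tree_def by (simp add: Ball_def) blast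
qed

definition band :: "'b digraph \<Rightarrow> ('b \<Rightarrow> nat) \<Rightarrow> nat \<Rightarrow> nat \<Rightarrow> 'b set" where
  "band T l n j = {z \<in> verts T. j * n \<le> l z \<and> l z \<le> j * n + 2 * n}"

lemma band_member:
  fixes j i n :: nat
  assumes "z \<in> verts T" "l z = j * n + i" "i \<le> n"
  shows "z \<in> band T l n j" "z \<in> band T l n (j - 1)"
  using assms unfolding band_def by (cases j; auto)+

text \<open>Gluing along a walk \<open>\<pi>\<^sub>1 = f\<^sub>0, \<dots>, f\<^sub>n = \<pi>\<^sub>2\<close> in \<open>H\<^sup>H\<^sup>\<times>\<^sup>H\<close>: if every band of a levelled
  digraph \<open>T\<close> maps to \<open>H\<close> by some \<open>A\<^sub>j\<close>, then \<open>T\<close> maps to \<open>H\<close> by sending a vertex \<open>z\<close> of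
  level \<open>j n + i\<close> (\<open>i < n\<close>) to \<open>f\<^sub>i(A\<^sub>j\<^sub>-\<^sub>1 z, A\<^sub>j z)\<close>. Across the level \<open>(j+1) n\<close> the two
  descriptions agree, as \<open>f\<^sub>n = \<pi>\<^sub>2\<close> and \<open>f\<^sub>0 = \<pi>\<^sub>1\<close>.\<close>

lemma bands_glue:
  assumes wfT: "wf_digraph T" and l: "is_hom T (dpath k) l"
    and n: "n \<ge> 1" and f0: "f 0 = proj1 H" and fn: "f n = proj2 H"
    and f: "\<forall>i<n. (f i, f (Suc i)) \<in> arcs (dexp H (dprod H H))"
    and bands: "\<forall>j. induced T (band T l n j) \<rightarrow>\<^sub>h H"
  shows "T \<rightarrow>\<^sub>h H"
proof -
  define A where "A j = (SOME g. is_hom (induced T (band T l n j)) H g)" for j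
  have A: "is_hom (induced T (band T l n j)) H (A j)" for j
    unfolding A_def using bands someI_ex unfolding hom_exists_def by metis
  have AV: "A j z \<in> verts H" if "z \<in> band T l n j" for j z
    using A[of j] that unfolding is_hom_def by simp
  have AA: "(A j a, A j b) \<in> arcs H" if "a \<in> band T l n j" "b \<in> band T l n j" "(a, b) \<in> arcs T" for j a b
    using A[of j] that unfolding is_hom_def by simp
  have fV: "f i \<in> verts (dprod H H) \<rightarrow>\<^sub>E verts H"
    and fA: "\<And>x y. (x, y) \<in> arcs (dprod H H) \<Longrightarrow> (f i x, f (Suc i) y) \<in> arcs H" if "i < n" for i
    using f that unfolding arcs_dexp by blast+
  define F where "F z = f (l z mod n) (A (l z div n - 1) z, A (l z div n) z)" for z
  have in_bands: "z \<in> band T l n (l z div n)" "z \<in> band T l n (l z div n - 1)"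
    if "z \<in> verts T" for z
  proof -
    have "l z = l z div n * n + l z mod n" "l z mod n \<le> n" using n by simp_all
    then show "z \<in> band T l n (l z div n)" "z \<in> band T l n (l z div n - 1)"
      using band_member[OF that] by blast+
  qed
  have "is_hom T H F" unfolding is_hom_def
  proof (intro conjI ballI allI impI)
    fix z assume z: "z \<in> verts T"
    have "(A (l z div n - 1) z, A (l z div n) z) \<in> verts (dprod H H)"
      using in_bands[OF z] AV by simp
    then show "F z \<in> verts H" unfolding F_def using fV[of "l z mod n"] n by auto
  next
    fix a b assume ab: "(a, b) \<in> arcs T"
    have a: "a \<in> verts T" and b: "b \<in> verts T" using wf_digraph_arcsD[OF wfT ab] by auto
    have lb: "l b = Suc (l a)" using l ab unfolding is_hom_def by auto
    define j i where "j = l a div n" and "i = l a mod n"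
    have la: "l a = j * n + i" and i: "i < n" unfolding j_def i_def using n by simp_all
    have a_in: "a \<in> band T l n j" "a \<in> band T l n (j - 1)"
      using in_bands[OF a] unfolding j_def by simp_all
    have b_in: "b \<in> band T l n j" "b \<in> band T l n (j - 1)"
      using band_member[where l = l, OF b, of j n "Suc i"] la lb i by simp_all
    have "((A (j - 1) a, A j a), (A (j - 1) b, A j b)) \<in> arcs (dprod H H)"
      using AA[OF a_in(2) b_in(2) ab] AA[OF a_in(1) b_in(1) ab] by simp
    then have step: "(f i (A (j - 1) a, A j a), f (Suc i) (A (j - 1) b, A j b)) \<in> arcs H"
      using fA[OF i] by blast
    txt \<open>Crossing a multiple of \<open>n\<close>, the walk ends in \<open>\<pi>\<^sub>2\<close> where the next one starts in \<open>\<pi>\<^sub>1\<close>.\<close>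
    have "F b = f (Suc i) (A (j - 1) b, A j b)"
    proof (cases "Suc i = n")
      case True
      then have "l b div n = Suc j" "l b mod n = 0"
        using lb unfolding j_def i_def by (simp_all add: div_Suc mod_Suc)
      then show ?thesis
        using True f0 fn AV[OF b_in(1)] AV[OF b_in(2)] AV[OF in_bands(1)[OF b]]
        unfolding F_def proj1_def proj2_def by simp
    next
      case False
      then have "l b div n = j" "l b mod n = Suc i"
        using lb unfolding j_def i_def by (simp_all add: div_Suc mod_Suc)
      then show ?thesis unfolding F_def by simp
    qed
    then show "(F a, F b) \<in> arcs H" using step unfolding F_def j_def i_def by simp
  qed
  then show ?thesis unfolding hom_exists_def by blast
qed

text \<open>Hence an oriented tree that does not map to \<open>H\<close> contains an oriented subtree of
  height at most \<open>2 n\<close> that does not map to \<open>H\<close>: a component of a band that fails to map.\<close>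

lemma low_height_subtree_obstruction:
  assumes tree: "oriented_tree T" and nTH: "\<not> T \<rightarrow>\<^sub>h H"
    and n: "n \<ge> 1" and f0: "f 0 = proj1 H" and fn: "f n = proj2 H"
    and f: "\<forall>i<n. (f i, f (Suc i)) \<in> arcs (dexp H (dprod H H))"
  shows "\<exists>C\<subseteq>verts T. oriented_tree (induced T C) \<and> alg_height (induced T C) \<le> 2 * n \<and>
           \<not> induced T C \<rightarrow>\<^sub>h H"
proof -
  have wfT: "wf_digraph T" using tree unfolding oriented_tree_def by blast
  obtain l where l: "is_hom T (dpath (alg_height T)) l" using oriented_tree_height_hom[OF tree] by blast
  obtain j where j: "\<not> induced T (band T l n j) \<rightarrow>\<^sub>h H"
    using bands_glue[OF wfT l n f0 fn f] nTH by blast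
  have S: "band T l n j \<subseteq> verts T" unfolding band_def by auto
  have "\<not> (\<forall>x\<in>band T l n j. induced T (component T (band T l n j) x) \<rightarrow>\<^sub>h H)"
    using components_hom j by metis
  then obtain x where x: "x \<in> band T l n j" and C: "\<not> induced T (component T (band T l n j) x) \<rightarrow>\<^sub>h H"
    by blast
  define C where "C = component T (band T l n j) x"
  have CS: "C \<subseteq> band T l n j" unfolding C_def using component_subset[OF x] .
  have "is_hom (induced T C) (dpath (2 * n)) (\<lambda>z. l z - j * n)"
    unfolding is_hom_def
  proof (intro conjI ballI allI impI)
    fix z assume "z \<in> verts (induced T C)"
    then show "l z - j * n \<in> verts (dpath (2 * n))" using CS unfolding band_def by auto
  next
    fix a b assume "(a, b) \<in> arcs (induced T C)"
    then have ab: "(a, b) \<in> arcs T" "a \<in> band T l n j" "b \<in> band T l n j" using CS by auto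
    have "l b = Suc (l a)" using l ab(1) unfolding is_hom_def by auto
    then show "(l a - j * n, l b - j * n) \<in> arcs (dpath (2 * n))"
      using ab(2,3) unfolding band_def by auto
  qed
  then have "alg_height (induced T C) \<le> 2 * n" by (rule alg_height_le)
  moreover have "oriented_tree (induced T C)"
    unfolding C_def using component_oriented_tree[OF tree x S] .
  ultimately show ?thesis using C CS S unfolding C_def by blast
qed

text \<open>(3) \<open>\<Longrightarrow>\<close> (1): the oriented trees of height at most \<open>2 n\<close> that do not map to \<open>H\<close>
  form a complete set of obstructions, as every obstruction from a tree duality
  contains one of them.\<close>

lemma walk_imp_bounded_height:
  assumes wfH: "wf_digraph H" and td: "tree_duality H"
    and walk: "(proj1 H, proj2 H) \<in> (arcs (dexp H (dprod H H)))\<^sup>*"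
  shows "bounded_height_tree_duality H"
proof -
  obtain n where n: "n \<ge> 1" and "(proj1 H, proj2 H) \<in> arcs (dexp H (dprod H H)) ^^ n"
    using relpow_positive_from_loop[OF proj1_loop[OF wfH] walk] by blast
  then obtain f where f0: "f 0 = proj1 H" and fn: "f n = proj2 H"
    and f: "\<forall>i<n. (f i, f (Suc i)) \<in> arcs (dexp H (dprod H H))"
    unfolding relpow_fun_conv by blast
  obtain \<F>0 where co0: "complete_obstructions H \<F>0" and trees0: "\<forall>F\<in>\<F>0. oriented_tree F"
    using td unfolding tree_duality_def by blast
  define \<F> where "\<F> = {F :: nat digraph. oriented_tree F \<and> alg_height F \<le> 2 * n \<and> \<not> F \<rightarrow>\<^sub>h H}"
  have "G \<rightarrow>\<^sub>h H" if G: "wf_digraph G" and no_obstr: "\<not> (\<exists>F\<in>\<F>. F \<rightarrow>\<^sub>h G)" for G :: "nat digraph"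
  proof (rule ccontr)
    assume "\<not> G \<rightarrow>\<^sub>h H"
    then obtain T where T: "T \<in> \<F>0" "T \<rightarrow>\<^sub>h G"
      using co0 G unfolding complete_obstructions_def by blast
    obtain C where C: "C \<subseteq> verts T" "oriented_tree (induced T C)"
        "alg_height (induced T C) \<le> 2 * n" "\<not> induced T C \<rightarrow>\<^sub>h H"
      using low_height_subtree_obstruction[OF _ obstruction_not_hom[OF co0 T(1)] n f0 fn f]
        trees0 T(1) by blast
    then have "induced T C \<in> \<F>" unfolding \<F>_def by blast
    moreover have "induced T C \<rightarrow>\<^sub>h G"
      using T(2) hom_induced[OF _ C(1)] unfolding hom_exists_def by blast
    ultimately show False using no_obstr by blast
  qed
  then have "complete_obstructions H \<F>"
    unfolding complete_obstructions_def \<F>_def oriented_tree_def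
    using hom_exists_trans by blast
  then show ?thesis unfolding bounded_height_tree_duality_def \<F>_def by blast
qed

theorem theorem3p2:
  fixes H :: "'a digraph"
  assumes "is_core H" and "tree_duality H"
  shows "(bounded_height_tree_duality H \<longleftrightarrow> (\<exists>n\<ge>1. crushed_cylinder H n \<rightarrow>\<^sub>h H)) \<and>
         (bounded_height_tree_duality H \<longleftrightarrow>
            (proj1 H, proj2 H) \<in> (arcs (dexp H (dprod H H)))\<^sup>*)"
proof -
  have wfH: "wf_digraph H" using assms(1) unfolding is_core_def by blast
  have "bounded_height_tree_duality H \<Longrightarrow> \<exists>n\<ge>1. crushed_cylinder H n \<rightarrow>\<^sub>h H"
    by (rule bounded_height_imp_crushed_cylinder_hom[OF wfH])
  moreover have "(\<exists>n\<ge>1. crushed_cylinder H n \<rightarrow>\<^sub>h H) \<Longrightarrow>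
      (proj1 H, proj2 H) \<in> (arcs (dexp H (dprod H H)))\<^sup>*"
    using crushed_cylinder_hom_imp_walk[OF assms(1)] by blast
  moreover have "(proj1 H, proj2 H) \<in> (arcs (dexp H (dprod H H)))\<^sup>* \<Longrightarrow>
      bounded_height_tree_duality H"
    by (rule walk_imp_bounded_height[OF wfH assms(2)])
  ultimately show ?thesis by blast
qed

end
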